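(* Let $n\le m$, let $\mathbf g\in\mathbb F_{q^m}^n$ have $\mathbb F_q$-linearly independent coordinates, let $1\le k\le n$, let $V\subseteq\mathbb F_{q^m}$ be an $\mathbb F_q$-subspace of dimension $s$ with $0<s<m$, and let $B$ be an $\mathbb F_q$-basis of $\mathbb F_{q^m}$. (1) If $m=n$, then $\mathrm{Stab}_R\bigl(\phi_B^{\mathrm{mat}}(\mathcal G(\mathbf g,k)\cap V^n)\bigr)$ contains an $\mathbb F_q$-subalgebra isomorphic to $\mathbb F_{q^m}$; in particular its $\mathbb F_q$-dimension is at least $m$. (2) For every $\mathbb F_q$-linear code $\mathcal C\subseteq\mathbb F_{q^m}^n$, $\dim_{\mathbb F_q}\mathrm{Ann}_L\bigl(\phi_B^{\mathrm{mat}}(\mathcal C\cap V^n)\bigr)\ge m(m-s)$, and consequently $\dim_{\mathbb F_q}\mathrm{Stab}_L\bigl(\phi_B^{\mathrm{mat}}(\mathcal C\cap V^n)\bigr)\ge m(m-s)+1$.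
   Context: For $B=(b_1,\dots,b_m)$ an $\mathbb F_q$-basis of $\mathbb F_{q^m}$, $\phi_B:\mathbb F_{q^m}\to\mathbb F_q^m$ maps $x=\sum_j x_jb_j$ to $(x_1,\dots,x_m)$, and $\phi_B^{\mathrm{mat}}:\mathbb F_{q^m}^n\to\mathbb F_q^{m\times n}$ maps $(x_1,\dots,x_n)$ to the $m\times n$ matrix whose $i$-th column is $\phi_B(x_i)^\top$. The Gabidulin code $\mathcal G(\mathbf g,k)$ is the $\mathbb F_{q^m}$-linear code generated by the rows of $(g_j^{q^i})_{0\le i<k,\,1\le j\le n}$. $V^n=V\times\cdots\times V$. For a matrix code $\mathcal M\subseteq\mathbb F_q^{m\times n}$: $\mathrm{Stab}_L(\mathcal M)=\{\mathbf P\in\mathbb F_q^{m\times m}:\mathbf P\mathcal M\subseteq\mathcal M\}$, $\mathrm{Stab}_R(\mathcal M)=\{\mathbf N\in\mathbb F_q^{n\times n}:\mathcal M\mathbf N\subseteq\mathcal M\}$, $\mathrm{Ann}_L(\mathcal M)=\{\mathbf A\in\mathbb F_q^{m\times m}:\mathbf A\mathbf C=\mathbf 0\ \forall\mathbf C\in\mathcal M\}$. *)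

theory Defs
  imports "HOL-Analysis.Analysis"
begin

text \<open>F_q is modelled by a finite field type 'a, F_{q^m} by a finite field type 'b
  together with an injective ring homomorphism iota : 'a => 'b (the inclusion of the
  subfield F_q).  The F_q-vector space structure on 'b is scalar multiplication
  c . x = iota c * x.  Vectors of length n are 'b^'n, m x n matrices over F_q are
  'a^'n^'m (m = CARD('m) rows, n = CARD('n) columns).\<close>

definition field_emb :: "('a::field \<Rightarrow> 'b::field) \<Rightarrow> bool" where
  "field_emb \<iota> \<longleftrightarrow> inj \<iota> \<and> \<iota> 1 = 1 \<and> (\<forall>x y. \<iota> (x + y) = \<iota> x + \<iota> y)
      \<and> (\<forall>x y. \<iota> (x * y) = \<iota> x * \<iota> y)"

definition escale :: "('a \<Rightarrow> 'b::field) \<Rightarrow> 'a \<Rightarrow> 'b \<Rightarrow> 'b" where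
  "escale \<iota> c x = \<iota> c * x"

definition vscale :: "('a \<Rightarrow> 'b::field) \<Rightarrow> 'a \<Rightarrow> 'b^'n \<Rightarrow> 'b^'n" where
  "vscale \<iota> c x = (\<chi> j. \<iota> c * x $ j)"

definition mscale :: "'a::field \<Rightarrow> 'a^'n^'m \<Rightarrow> 'a^'n^'m" where
  "mscale c A = (\<chi> i j. c * A $ i $ j)"

definition is_Fq_basis :: "('a::field \<Rightarrow> 'b::field) \<Rightarrow> 'b^'m \<Rightarrow> bool" where
  "is_Fq_basis \<iota> b \<longleftrightarrow> inj (\<lambda>i. b $ i)
      \<and> \<not> module.dependent (escale \<iota>) (range (\<lambda>i. b $ i))
      \<and> module.span (escale \<iota>) (range (\<lambda>i. b $ i)) = UNIV"

definition phiB :: "('a::field \<Rightarrow> 'b::field) \<Rightarrow> 'b^'m \<Rightarrow> 'b \<Rightarrow> 'a^'m" where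
  "phiB \<iota> b x = (THE v. x = (\<Sum>i\<in>UNIV. \<iota> (v $ i) * b $ i))"

definition phiB_mat :: "('a::field \<Rightarrow> 'b::field) \<Rightarrow> 'b^'m \<Rightarrow> 'b^'n \<Rightarrow> 'a^'n^'m" where
  "phiB_mat \<iota> b x = (\<chi> i j. phiB \<iota> b (x $ j) $ i)"

definition gabidulin :: "'a::{finite,field} itself \<Rightarrow> 'b::field^'n \<Rightarrow> nat \<Rightarrow> ('b^'n) set" where
  "gabidulin _ g k = vec.span {(\<chi> j. (g $ j) ^ (CARD('a) ^ i)) | i. i < k}"

definition restrict_V :: "('b^'n) set \<Rightarrow> 'b set \<Rightarrow> ('b^'n) set" where
  "restrict_V C V = {x \<in> C. \<forall>j. x $ j \<in> V}"

definition StabL :: "('a::field^'n^'m) set \<Rightarrow> ('a^'m^'m) set" where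
  "StabL M = {P. \<forall>C\<in>M. P ** C \<in> M}"

definition StabR :: "('a::field^'n^'m) set \<Rightarrow> ('a^'n^'n) set" where
  "StabR M = {N. \<forall>C\<in>M. C ** N \<in> M}"

definition AnnL :: "('a::field^'n^'m) set \<Rightarrow> ('a^'m^'m) set" where
  "AnnL M = {A. \<forall>C\<in>M. A ** C = 0}"

definition mdim :: "('a::field^'n^'m) set \<Rightarrow> nat" where
  "mdim S = vector_space.dim mscale S"

end

theory Submission
  imports Defs "HOL-Computational_Algebra.Polynomial"
begin

text \<open>(1) For \<open>n = m\<close> the coordinates of \<open>g\<close> form an \<open>F_q\<close>-basis of \<open>F_{q^m}\<close>. Let \<open>N(\<alpha>)\<close> be
  the matrix of multiplication by \<open>\<alpha>\<close> in this basis. Since the Frobenius \<open>x \<mapsto> x^q\<close> is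
  \<open>F_q\<close>-linear, the lift of \<open>N(\<alpha>)\<close> to \<open>F_{q^m}\<close> maps the generator \<open>(g_j^{q^i})_j\<close> of the
  Gabidulin code to \<open>\<alpha>^{q^i}\<close> times itself, and it preserves \<open>V^n\<close>. Hence
  \<open>\<alpha> \<mapsto> N(\<alpha>)\<close> embeds \<open>F_{q^m}\<close> into the right stabiliser.
  (2) A matrix annihilates \<open>\<phi>_B(C \<inter> V^n)\<close> as soon as it kills the \<open>s\<close>-dimensional subspace
  \<open>\<phi>_B(V)\<close> of \<open>F_q^m\<close>. Such matrices form an \<open>m(m - s)\<close>-dimensional space, and together
  with the identity they lie in the left stabiliser.\<close>

section \<open>Finite fields\<close>

lemma card_UNIV_field_ge_2: "2 \<le> CARD('a::{finite,field})"
proof -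
  have "card {0::'a, 1} \<le> CARD('a)" by (rule card_mono) auto
  then show ?thesis by simp
qed

lemma finite_field_power_card: "x ^ CARD('a) = (x :: 'a::{finite,field})"
proof (cases "x = 0")
  case False
  have "(\<Prod>y\<in>UNIV-{0}. x * y) = (\<Prod>y\<in>UNIV-{0::'a}. y)"
    by (rule prod.reindex_bij_witness[of _ "\<lambda>y. y / x" "\<lambda>y. x * y"]) (use False in auto)
  then have "x ^ (CARD('a) - 1) = 1"
    by (simp add: prod.distrib card_Diff_singleton)
  moreover obtain n where "CARD('a) = Suc n"
    using card_UNIV_field_ge_2[where 'a='a] by (cases "CARD('a)") auto
  ultimately show ?thesis
    by simp
qed (use card_UNIV_field_ge_2[where 'a='a] in simp)

text \<open>The polynomial \<open>(X + 1)^q - X^q - 1\<close> vanishes on all \<open>q\<close> elements of the field but has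
  degree below \<open>q\<close>, so it is zero; its coefficients are the middle binomial coefficients.\<close>
lemma of_nat_card_choose_eq_0:
  assumes "0 < k" "k < CARD('a::{finite,field})"
  shows "(of_nat (CARD('a) choose k) :: 'a) = 0"
proof -
  define q where "q = CARD('a)"
  have q2: "2 \<le> q" using card_UNIV_field_ge_2[where 'a='a] by (simp add: q_def)
  define P :: "'a poly" where "P = [:1, 1:] ^ q - monom 1 q - 1"
  have coeff_P: "coeff P i = of_nat (q choose i) - (if i = q then 1 else 0) - (if i = 0 then 1 else 0)" for i
    by (cases "i \<le> q")
      (simp_all add: P_def coeff_linear_poly_power binomial_eq_0 coeff_eq_0 degree_linear_power)
  have "poly P x = 0" for x
    using finite_field_power_card[of x] finite_field_power_card[of "1 + x"]
    by (simp add: P_def poly_monom q_def algebra_simps)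
  then have roots: "card {x. poly P x = 0} = q" by (simp add: q_def)
  have "degree P \<le> q - 1"
    by (rule degree_le) (use q2 in \<open>auto simp: coeff_P binomial_eq_0\<close>)
  then have "P = 0"
    using card_poly_roots_bound[of P] roots q2 by fastforce
  then have "coeff P k = 0" by simp
  then show ?thesis using assms by (simp add: coeff_P q_def)
qed

section \<open>Matrix spaces\<close>

lemma (in vector_space) biorthogonal_independent:
  assumes "finite T"
    and linear_f: "\<And>t. t \<in> T \<Longrightarrow> Vector_Spaces.linear scale (*) (f t)"
    and f_x: "\<And>s t. s \<in> T \<Longrightarrow> t \<in> T \<Longrightarrow> f t (x s) = (if s = t then 1 else 0)"
  shows "inj_on x T" and "independent (x ` T)"
proof -
  show inj: "inj_on x T"
    by (rule inj_onI) (metis f_x one_neq_zero)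
  show "independent (x ` T)"
  proof (rule independent_if_scalars_zero)
    show "finite (x ` T)" using \<open>finite T\<close> by simp
  next
    fix c y assume sum0: "(\<Sum>y\<in>x ` T. scale (c y) y) = 0" and "y \<in> x ` T"
    then obtain t where t: "t \<in> T" "y = x t" by blast
    interpret ft: Vector_Spaces.linear scale "(*)" "f t" by (rule linear_f[OF t(1)])
    have "0 = f t (\<Sum>s\<in>T. scale (c (x s)) (x s))"
      using sum0 by (simp add: sum.reindex[OF inj])
    also have "\<dots> = (\<Sum>s\<in>T. c (x s) * (if s = t then 1 else 0))"
      by (simp add: ft.sum ft.scale f_x[OF _ t(1)])
    also have "\<dots> = c y"
      using t \<open>finite T\<close> by (simp add: if_distrib cong: if_cong)
    finally show "c y = 0" by simp
  qed
qed

interpretation Mat: vector_space "mscale :: 'a::field \<Rightarrow> 'a^'n^'m \<Rightarrow> 'a^'n^'m"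
  by unfold_locales (simp_all add: mscale_def vec_eq_iff algebra_simps)

text \<open>Any basis will do: the matrix space is finite.\<close>
interpretation Mat: finite_dimensional_vector_space
    "mscale :: 'a::{finite,field} \<Rightarrow> 'a^'n^'m \<Rightarrow> 'a^'n^'m" "Mat.extend_basis {}"
  by unfold_locales (simp_all add: Mat.independent_extend_basis Mat.span_extend_basis Mat.independent_empty)

lemma mscale_matrix_vector_mult: "mscale c A *v v = c *s (A *v v)"
  by (simp add: mscale_def matrix_vector_mult_def vector_scalar_mult_def vec_eq_iff
      sum_distrib_left mult.assoc)

lemma linear_matrix_vector_mult_component:
  "Vector_Spaces.linear mscale (*) (\<lambda>A :: 'a::field^'n^'m. (A *v v) $ i)"
  by (simp add: Vector_Spaces.linear_iff Mat.vector_space_axioms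
      vector_space_over_itself.vector_space_axioms matrix_vector_mult_add_rdistrib
      mscale_matrix_vector_mult)

lemma AnnL_subset_StabL: "0 \<in> M \<Longrightarrow> AnnL M \<subseteq> StabL M"
  by (auto simp: AnnL_def StabL_def)

lemma mat_1_in_StabL: "mat 1 \<in> StabL M"
  by (simp add: StabL_def)

lemma vanishing_dual_functionals:
  fixes W :: "('a::field^'m) set"
  obtains U and f :: "'a^'m \<Rightarrow> 'a^'m \<Rightarrow> 'a"
  where "card U = CARD('m) - vec.dim W" and "\<And>u. Vector_Spaces.linear (*s) (*) (f u)"
    and "\<And>u w. u \<in> U \<Longrightarrow> w \<in> W \<Longrightarrow> f u w = 0"
    and "\<And>u u'. u \<in> U \<Longrightarrow> u' \<in> U \<Longrightarrow> f u u' = (if u' = u then 1 else 0)"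
proof -
  obtain Bw where Bw: "Bw \<subseteq> W" "vec.independent Bw" "W \<subseteq> vec.span Bw" "card Bw = vec.dim W"
    by (rule vec.basis_exists)
  define B where "B = vec.extend_basis Bw"
  have B: "Bw \<subseteq> B" "vec.independent B" "vec.span B = UNIV"
    unfolding B_def using Bw(2)
    by (simp_all add: vec.extend_basis_superset vec.independent_extend_basis)
  have "card B = CARD('m)"
    using vec.basis_card_eq_dim[of B UNIV] B by (simp add: card_cart_basis)
  then have "card (B - Bw) = CARD('m) - vec.dim W"
    using card_Diff_subset[OF finite_subset[OF B(1) vec.finiteI_independent[OF B(2)]] B(1)] Bw(4)
    by simp
  moreover have "Vector_Spaces.linear (*s) (*) (\<lambda>w. vec.representation B w u)" for u
    by (rule vec.linear_representation[OF B(2,3)])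
  moreover have "vec.representation B w u = 0" if "u \<in> B - Bw" "w \<in> W" for u w
  proof -
    have "vec.representation B w u = vec.representation Bw w u"
      using vec.representation_extend[OF B(2) _ B(1), of w] that(2) Bw(3) by auto
    then show ?thesis
      using vec.representation_ne_zero[of Bw w u] that(1) by auto
  qed
  moreover have "vec.representation B u' u = (if u' = u then 1 else 0)" if "u' \<in> B" for u u'
    using vec.representation_basis[OF B(2) that] by simp
  ultimately show ?thesis
    by (intro that[of "B - Bw" "\<lambda>u w. vec.representation B w u"]) auto
qed

lemma mdim_matrix_annihilator_ge:
  fixes W :: "('a::{finite,field}^'m) set"
  shows "CARD('k) * (CARD('m) - vec.dim W) \<le> mdim {A :: 'a^'m^'k. \<forall>w\<in>W. A *v w = 0}"
proof -
  obtain U and f :: "'a^'m \<Rightarrow> 'a^'m \<Rightarrow> 'a"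
    where card_U: "card U = CARD('m) - vec.dim W" and linear_f: "\<And>u. Vector_Spaces.linear (*s) (*) (f u)"
      and f_W: "\<And>u w. u \<in> U \<Longrightarrow> w \<in> W \<Longrightarrow> f u w = 0"
      and f_U: "\<And>u u'. u \<in> U \<Longrightarrow> u' \<in> U \<Longrightarrow> f u u' = (if u' = u then 1 else 0)"
    using vanishing_dual_functionals[of W] by blast
  define E :: "'k \<times> ('a^'m) \<Rightarrow> 'a^'m^'k"
    where "E = (\<lambda>(i, u). matrix (\<lambda>w. f u w *s axis i 1))"
  have E_apply: "E (i, u) *v w = f u w *s axis i 1" for i u w
    unfolding E_def
    by (simp add: matrix_works Vector_Spaces.linear_compose[OF linear_f vec.linear_scale_left,
          unfolded comp_def])
  have "(E s *v snd t) $ fst t = (if s = t then 1 else 0)" if "s \<in> UNIV \<times> U" "t \<in> UNIV \<times> U" for s t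
    using that f_U[of "snd s" "snd t"] by (auto simp: E_apply axis_def prod_eq_iff)
  then have indep: "Mat.independent (E ` (UNIV \<times> U))" and inj: "inj_on E (UNIV \<times> U)"
    using Mat.biorthogonal_independent[of "UNIV \<times> U" "\<lambda>t A. (A *v snd t) $ fst t" E]
    by (simp_all add: linear_matrix_vector_mult_component)
  have "E ` (UNIV \<times> U) \<subseteq> {A. \<forall>w\<in>W. A *v w = 0}"
    by (auto simp: E_apply f_W)
  then have "card (E ` (UNIV \<times> U)) \<le> mdim {A :: 'a^'m^'k. \<forall>w\<in>W. A *v w = 0}"
    unfolding mdim_def by (rule Mat.independent_card_le_dim[OF _ indep])
  then show ?thesis
    by (simp add: card_image[OF inj] card_cartesian_product card_U)
qed

section \<open>Field embeddings and the Frobenius\<close>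

locale field_embedding =
  fixes \<iota> :: "'a::{finite,field} \<Rightarrow> 'b::{finite,field}"
  assumes field_emb: "field_emb \<iota>"
begin

lemma emb_add: "\<iota> (x + y) = \<iota> x + \<iota> y" and emb_mult: "\<iota> (x * y) = \<iota> x * \<iota> y"
  and emb_one: "\<iota> 1 = 1"
  using field_emb by (auto simp: field_emb_def)

lemma emb_zero: "\<iota> 0 = 0"
  by (metis emb_add add.right_neutral add_left_cancel)

lemma emb_sum: "\<iota> (\<Sum>i\<in>I. f i) = (\<Sum>i\<in>I. \<iota> (f i))"
  by (induction I rule: infinite_finite_induct) (simp_all add: emb_zero emb_add)

lemma emb_power: "\<iota> (x ^ n) = \<iota> x ^ n"
  by (induction n) (simp_all add: emb_one emb_mult)

lemma emb_of_nat: "\<iota> (of_nat n) = of_nat n"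
  by (induction n) (simp_all add: emb_zero emb_one emb_add)

sublocale Fqm: vector_space "escale \<iota>"
  by unfold_locales (simp_all add: escale_def emb_add emb_mult emb_one algebra_simps)

lemma power_card_add: "(x + y :: 'b) ^ CARD('a) = x ^ CARD('a) + y ^ CARD('a)"
proof -
  have binomial_0: "(of_nat (CARD('a) choose k) :: 'b) = 0" if "0 < k" "k < CARD('a)" for k
    using of_nat_card_choose_eq_0[OF that] emb_of_nat[of "CARD('a) choose k"] emb_zero by simp
  have "(x + y) ^ CARD('a) = (\<Sum>k\<le>CARD('a). of_nat (CARD('a) choose k) * x ^ k * y ^ (CARD('a) - k))"
    by (rule binomial_ring)
  also have "\<dots> = (\<Sum>k\<in>{0, CARD('a)}. of_nat (CARD('a) choose k) * x ^ k * y ^ (CARD('a) - k))"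
    by (rule sum.mono_neutral_right) (use binomial_0 in auto)
  finally show ?thesis
    using card_UNIV_field_ge_2[where 'a='a] by simp
qed

lemma power_card_power_add: "(x + y :: 'b) ^ (CARD('a) ^ i) = x ^ (CARD('a) ^ i) + y ^ (CARD('a) ^ i)"
  by (induction i arbitrary: x y) (simp_all add: power_mult power_card_add)

lemma emb_power_card_power: "\<iota> c ^ (CARD('a) ^ i) = \<iota> c"
  by (induction i) (simp_all add: power_mult finite_field_power_card flip: emb_power)

lemma power_card_power_sum_scale:
  "(\<Sum>l\<in>L. \<iota> (c l) * y l) ^ (CARD('a) ^ i) = (\<Sum>l\<in>L. \<iota> (c l) * y l ^ (CARD('a) ^ i))"
  by (induction L rule: infinite_finite_induct)
    (simp_all add: power_card_power_add power_mult_distrib emb_power_card_power)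

lemma map_matrix_mat_1: "map_matrix \<iota> (mat 1) = mat 1"
  by (simp add: vec_eq_iff mat_def emb_zero emb_one)

lemma map_matrix_add: "map_matrix \<iota> (A + B) = map_matrix \<iota> A + map_matrix \<iota> B"
  by (simp add: vec_eq_iff emb_add)

lemma map_matrix_mult: "map_matrix \<iota> (A ** B) = map_matrix \<iota> A ** map_matrix \<iota> B"
  by (simp add: vec_eq_iff matrix_matrix_mult_def emb_sum emb_mult)

lemma vector_map_matrix_mscale:
  "z v* map_matrix \<iota> (mscale c A) = \<iota> c *s (z v* map_matrix \<iota> A)"
  by (simp add: vec_eq_iff vector_matrix_mult_def mscale_def emb_mult sum_distrib_left mult_ac)

lemma power_card_power_vector_map_matrix:
  "(\<chi> j. z $ j ^ (CARD('a) ^ i)) v* map_matrix \<iota> N = (\<chi> j. (z v* map_matrix \<iota> N) $ j ^ (CARD('a) ^ i))"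
proof -
  have "(\<Sum>l\<in>UNIV. z $ l * \<iota> (N $ l $ j)) ^ (CARD('a) ^ i)
      = (\<Sum>l\<in>UNIV. z $ l ^ (CARD('a) ^ i) * \<iota> (N $ l $ j))" for j
    using power_card_power_sum_scale[of "\<lambda>l. N $ l $ j" "\<lambda>l. z $ l" UNIV i]
    by (simp add: mult.commute)
  then show ?thesis
    by (simp add: vec_eq_iff vector_matrix_mult_def)
qed

text \<open>Since \<open>z \<mapsto> z v* map_matrix \<iota> N\<close> commutes with the Frobenius, it maps each
  generator of the Gabidulin code to a multiple of itself.\<close>
lemma gabidulin_vector_map_matrix:
  fixes g :: "'b^'n"
  assumes eigen: "g v* map_matrix \<iota> N = \<alpha> *s g" and z: "z \<in> gabidulin TYPE('a) g k"
  shows "z v* map_matrix \<iota> N \<in> gabidulin TYPE('a) g k"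
proof -
  define rows where "rows = {(\<chi> j. g $ j ^ (CARD('a) ^ i)) | i. i < k}"
  interpret T: Vector_Spaces.linear "(*s)" "(*s)" "\<lambda>z :: 'b^'n. z v* map_matrix \<iota> N"
    by (simp add: Vector_Spaces.linear_iff vec.vector_space_axioms vector_matrix_left_distrib
        scalar_vector_matrix_assoc)
  have "r v* map_matrix \<iota> N \<in> vec.span rows" if "r \<in> rows" for r
  proof -
    obtain i where r: "r = (\<chi> j. g $ j ^ (CARD('a) ^ i))"
      using \<open>r \<in> rows\<close> by (auto simp: rows_def)
    have "r v* map_matrix \<iota> N = \<alpha> ^ (CARD('a) ^ i) *s r"
      by (simp add: r power_card_power_vector_map_matrix eigen vec_eq_iff power_mult_distrib)
    then show ?thesis
      using that by (simp add: vec.span_scale vec.span_base)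
  qed
  then have "(\<lambda>z. z v* map_matrix \<iota> N) ` vec.span rows \<subseteq> vec.span rows"
    by (simp add: T.span_image[symmetric] vec.span_minimal vec.subspace_span image_subset_iff)
  then show ?thesis
    using z by (auto simp: gabidulin_def rows_def)
qed

lemma zero_in_vscale_subspace:
  fixes C :: "('b^'n) set"
  assumes "module.subspace (vscale \<iota>) C"
  shows "0 \<in> C"
proof -
  interpret code: vector_space "vscale \<iota> :: 'a \<Rightarrow> 'b^'n \<Rightarrow> 'b^'n"
    by unfold_locales (simp_all add: vscale_def vec_eq_iff emb_add emb_mult emb_one algebra_simps)
  show ?thesis
    using assms by (rule code.subspace_0)
qed

lemma subspace_vector_map_matrix:
  assumes "Fqm.subspace V" "\<forall>j. z $ j \<in> V"
  shows "\<forall>j. (z v* map_matrix \<iota> N) $ j \<in> V"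
  using assms Fqm.subspace_scale[OF assms(1)]
  by (auto simp: vector_matrix_mult_def escale_def mult.commute intro!: Fqm.subspace_sum)

end

section \<open>Coordinates with respect to an \<open>F_q\<close>-basis\<close>

locale Fq_basis = field_embedding \<iota> for \<iota> :: "'a::{finite,field} \<Rightarrow> 'b::{finite,field}" +
  fixes b :: "'b^'m"
  assumes is_basis: "is_Fq_basis \<iota> b"
begin

lemma inj_basis: "inj (($) b)" and independent_basis: "Fqm.independent (range (($) b))"
  and span_basis: "Fqm.span (range (($) b)) = UNIV"
  using is_basis by (auto simp: is_Fq_basis_def)

sublocale Fqm: finite_dimensional_vector_space "escale \<iota>" "range (($) b)"
  by unfold_locales (simp_all add: independent_basis span_basis)

lemma dim_UNIV: "Fqm.dim UNIV = CARD('m)"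
  using card_image[OF inj_basis] by simp

abbreviation coord :: "'b \<Rightarrow> 'b \<Rightarrow> 'a" where
  "coord x u \<equiv> Fqm.representation (range (($) b)) x u"

lemma sum_coord: "(\<Sum>i\<in>UNIV. \<iota> (coord x (b $ i)) * b $ i) = x"
proof -
  have "(\<Sum>u\<in>range (($) b). \<iota> (coord x u) * u) = x"
    using Fqm.sum_representation_eq[OF independent_basis _ _ subset_refl] span_basis
    by (simp add: escale_def)
  then show ?thesis
    by (simp add: sum.reindex[OF inj_basis])
qed

lemma coord_sum: "coord (\<Sum>i\<in>UNIV. \<iota> (v $ i) * b $ i) (b $ j) = v $ j"
proof -
  interpret R: Vector_Spaces.linear "escale \<iota>" "(*)" "\<lambda>x. coord x (b $ j)"
    by (rule Fqm.linear_representation[OF independent_basis span_basis])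
  have "coord (\<Sum>i\<in>UNIV. escale \<iota> (v $ i) (b $ i)) (b $ j) = (\<Sum>i\<in>UNIV. v $ i * (if j = i then 1 else 0))"
    using inj_basis
    by (simp add: R.sum R.scale Fqm.representation_basis[OF independent_basis] inj_eq)
  then show ?thesis
    by (simp add: escale_def if_distrib cong: if_cong)
qed

lemma phiB_eq_coord: "phiB \<iota> b x = (\<chi> i. coord x (b $ i))"
  unfolding phiB_def
proof (rule the_equality)
  fix v assume "x = (\<Sum>i\<in>UNIV. \<iota> (v $ i) * b $ i)"
  then show "v = (\<chi> i. coord x (b $ i))"
    by (simp add: vec_eq_iff coord_sum)
qed (simp add: sum_coord)

lemma sum_phiB: "(\<Sum>i\<in>UNIV. \<iota> (phiB \<iota> b x $ i) * b $ i) = x"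
  by (simp add: phiB_eq_coord sum_coord)

lemma phiB_sum: "phiB \<iota> b (\<Sum>i\<in>UNIV. \<iota> (v $ i) * b $ i) = v"
  by (simp add: phiB_eq_coord vec_eq_iff coord_sum)

lemma linear_phiB: "Vector_Spaces.linear (escale \<iota>) (*s) (phiB \<iota> b)"
proof -
  have "phiB \<iota> b (x + y) = phiB \<iota> b x + phiB \<iota> b y" for x y
    using phiB_sum[of "phiB \<iota> b x + phiB \<iota> b y"]
    by (simp add: emb_add distrib_right sum.distrib sum_phiB)
  moreover have "phiB \<iota> b (escale \<iota> c x) = c *s phiB \<iota> b x" for c x
    using phiB_sum[of "c *s phiB \<iota> b x"]
    by (simp add: escale_def emb_mult mult.assoc sum_distrib_left[symmetric] sum_phiB)
  ultimately show ?thesis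
    by (simp add: Vector_Spaces.linear_iff Fqm.vector_space_axioms vec.vector_space_axioms)
qed

sublocale phiB: Vector_Spaces.linear "escale \<iota>" "(*s)" "phiB \<iota> b"
  by (rule linear_phiB)

lemma inj_phiB: "inj (phiB \<iota> b)"
  by (metis injI sum_phiB)

lemma phiB_nonzero: "x \<noteq> 0 \<Longrightarrow> phiB \<iota> b x \<noteq> 0"
  using phiB.zero inj_phiB by (metis injD)

lemma phiB_mat_mult: "phiB_mat \<iota> b z ** N = phiB_mat \<iota> b (z v* map_matrix \<iota> N)"
proof -
  have "(\<Sum>l\<in>UNIV. z $ l * \<iota> (N $ l $ j)) = (\<Sum>l\<in>UNIV. escale \<iota> (N $ l $ j) (z $ l))" for j
    by (simp add: escale_def mult.commute)
  then have "phiB \<iota> b (\<Sum>l\<in>UNIV. z $ l * \<iota> (N $ l $ j)) = (\<Sum>l\<in>UNIV. N $ l $ j *s phiB \<iota> b (z $ l))"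
    for j by (simp add: phiB.sum phiB.scale)
  then show ?thesis
    by (simp add: vec_eq_iff matrix_matrix_mult_def phiB_mat_def vector_matrix_mult_def
        sum_component mult.commute)
qed

lemma matrix_mult_phiB_mat: "(A ** phiB_mat \<iota> b x) $ i $ j = (A *v phiB \<iota> b (x $ j)) $ i"
  by (simp add: matrix_matrix_mult_def matrix_vector_mult_def phiB_mat_def)

lemma in_StabR_phiB_mat:
  assumes "Fqm.subspace V" and "\<And>z. z \<in> C \<Longrightarrow> z v* map_matrix \<iota> N \<in> C"
  shows "N \<in> StabR (phiB_mat \<iota> b ` restrict_V C V)"
  using assms subspace_vector_map_matrix[OF assms(1)]
  by (auto simp: StabR_def restrict_V_def phiB_mat_mult intro!: imageI)

lemma annihilator_subset_AnnL:
  "{A. \<forall>w\<in>phiB \<iota> b ` V. A *v w = 0} \<subseteq> AnnL (phiB_mat \<iota> b ` restrict_V C V)"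
  by (auto simp: AnnL_def restrict_V_def vec_eq_iff matrix_mult_phiB_mat)

lemma mdim_annihilator_ge:
  "CARD('m) * (CARD('m) - Fqm.dim V) \<le> mdim {A :: 'a^'m^'m. \<forall>w\<in>phiB \<iota> b ` V. A *v w = 0}"
proof -
  interpret finite_dimensional_vector_space_pair_1 "escale \<iota>" "range (($) b)" "(*s)"
    by unfold_locales
  have dim_eq: "vec.dim (phiB \<iota> b ` V) = Fqm.dim V"
    using dim_image_eq[OF linear_phiB] inj_phiB by (simp add: inj_on_subset)
  show ?thesis
    using mdim_matrix_annihilator_ge[of "phiB \<iota> b ` V"] unfolding dim_eq .
qed

lemma mdim_AnnL_ge:
  "CARD('m) * (CARD('m) - Fqm.dim V) \<le> mdim (AnnL (phiB_mat \<iota> b ` restrict_V C V))"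
  using mdim_annihilator_ge[unfolded mdim_def] Mat.dim_subset[OF annihilator_subset_AnnL]
  unfolding mdim_def by (rule order.trans)

lemma mdim_StabL_ge:
  assumes "Fqm.subspace V" "V \<noteq> {0}" "0 \<in> C"
  shows "CARD('m) * (CARD('m) - Fqm.dim V) + 1 \<le> mdim (StabL (phiB_mat \<iota> b ` restrict_V C V))"
proof -
  define K where "K = {A :: 'a^'m^'m. \<forall>w\<in>phiB \<iota> b ` V. A *v w = 0}"
  have "Mat.subspace K"
    by (auto simp: K_def Mat.subspace_def matrix_vector_mult_add_rdistrib mscale_matrix_vector_mult)
  moreover obtain v where "v \<in> V" "v \<noteq> 0"
    using assms(1,2) Fqm.subspace_0 by blast
  then have "mat 1 \<notin> K"
    using phiB_nonzero by (auto simp: K_def)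
  ultimately have insert_K: "mdim (insert (mat 1) K) = mdim K + 1"
    by (simp add: mdim_def Mat.dim_insert Mat.span_eq_iff[THEN iffD2])
  have "0 \<in> restrict_V C V"
    using assms(1,3) Fqm.subspace_0 by (simp add: restrict_V_def)
  then have "0 \<in> phiB_mat \<iota> b ` restrict_V C V"
    by (rule image_eqI[rotated]) (simp add: phiB_mat_def vec_eq_iff)
  then have "K \<subseteq> StabL (phiB_mat \<iota> b ` restrict_V C V)"
    unfolding K_def by (rule order.trans[OF annihilator_subset_AnnL AnnL_subset_StabL])
  then have "insert (mat 1) K \<subseteq> StabL (phiB_mat \<iota> b ` restrict_V C V)"
    by (simp add: mat_1_in_StabL)
  then have "mdim (insert (mat 1) K) \<le> mdim (StabL (phiB_mat \<iota> b ` restrict_V C V))"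
    unfolding mdim_def by (rule Mat.dim_subset)
  then show ?thesis
    using mdim_annihilator_ge[of V] insert_K unfolding K_def by linarith
qed

end

section \<open>The regular representation\<close>

definition mult_matrix :: "('a::field \<Rightarrow> 'b::field) \<Rightarrow> 'b^'m \<Rightarrow> 'b \<Rightarrow> 'a^'m^'m" where
  "mult_matrix \<iota> e x = phiB_mat \<iota> e (x *s e)"

context Fq_basis
begin

lemma basis_vector_map_matrix_eq_iff:
  "b v* map_matrix \<iota> N = x *s b \<longleftrightarrow> mult_matrix \<iota> b x = N"
proof
  assume "b v* map_matrix \<iota> N = x *s b"
  then have "x * b $ j = (\<Sum>i\<in>UNIV. \<iota> ((\<chi> i. N $ i $ j) $ i) * b $ i)" for j
    by (auto simp: vec_eq_iff vector_matrix_mult_def mult.commute)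
  then have "phiB \<iota> b (x * b $ j) = (\<chi> i. N $ i $ j)" for j
    by (simp only: phiB_sum)
  then show "mult_matrix \<iota> b x = N"
    by (simp add: vec_eq_iff mult_matrix_def phiB_mat_def)
next
  assume "mult_matrix \<iota> b x = N"
  then have "N $ i $ j = phiB \<iota> b (x * b $ j) $ i" for i j
    by (auto simp: mult_matrix_def phiB_mat_def)
  then have "(\<Sum>i\<in>UNIV. b $ i * \<iota> (N $ i $ j)) = x * b $ j" for j
    using sum_phiB[of "x * b $ j"] by (simp add: mult.commute)
  then show "b v* map_matrix \<iota> N = x *s b"
    by (simp add: vec_eq_iff vector_matrix_mult_def)
qed

lemma basis_vector_map_mult_matrix: "b v* map_matrix \<iota> (mult_matrix \<iota> b x) = x *s b"
  by (simp add: basis_vector_map_matrix_eq_iff)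

lemma mult_matrix_1: "mult_matrix \<iota> b 1 = mat 1"
  by (simp add: basis_vector_map_matrix_eq_iff[symmetric] map_matrix_mat_1)

lemma mult_matrix_add: "mult_matrix \<iota> b (x + y) = mult_matrix \<iota> b x + mult_matrix \<iota> b y"
  by (simp add: basis_vector_map_matrix_eq_iff[symmetric] map_matrix_add
      vector_matrix_mult_add_rdistrib basis_vector_map_mult_matrix vector_sadd_rdistrib)

lemma mult_matrix_mult: "mult_matrix \<iota> b (x * y) = mult_matrix \<iota> b x ** mult_matrix \<iota> b y"
  by (simp add: basis_vector_map_matrix_eq_iff[symmetric] map_matrix_mult
      basis_vector_map_mult_matrix scalar_vector_matrix_assoc flip: vector_matrix_mul_assoc)

lemma mult_matrix_scale: "mult_matrix \<iota> b (\<iota> c * x) = mscale c (mult_matrix \<iota> b x)"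
  by (simp add: basis_vector_map_matrix_eq_iff[symmetric] vector_map_matrix_mscale
      basis_vector_map_mult_matrix)

lemma inj_mult_matrix: "inj (mult_matrix \<iota> b)"
proof (rule injI)
  fix x y assume "mult_matrix \<iota> b x = mult_matrix \<iota> b y"
  then have "x *s b = y *s b"
    by (metis basis_vector_map_mult_matrix)
  moreover have "b $ i \<noteq> 0" for i
    using Fqm.dependent_zero[of "range (($) b)"] independent_basis rangeI[of "($) b" i] by metis
  ultimately show "x = y"
    by (metis mult_right_cancel vec_eq_iff vector_smult_component)
qed

lemma linear_mult_matrix: "Vector_Spaces.linear (escale \<iota>) mscale (mult_matrix \<iota> b)"
  by (simp add: Vector_Spaces.linear_iff Fqm.vector_space_axioms Mat.vector_space_axioms
      mult_matrix_add mult_matrix_scale escale_def)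

lemma is_Fq_basis_of_card_eq:
  fixes g :: "'b^'n"
  assumes "inj (($) g)" "Fqm.independent (range (($) g))" "CARD('n) = CARD('m)"
  shows "is_Fq_basis \<iota> g"
  using assms Fqm.card_eq_dim[of "range (($) g)" UNIV] card_image[OF assms(1)] dim_UNIV
  by (auto simp: is_Fq_basis_def)

lemma range_mult_matrix_subset_StabR:
  fixes g :: "'b^'n"
  assumes "is_Fq_basis \<iota> g" "Fqm.subspace V"
  shows "range (mult_matrix \<iota> g) \<subseteq> StabR (phiB_mat \<iota> b ` restrict_V (gabidulin TYPE('a) g k) V)"
proof -
  interpret G: Fq_basis \<iota> g by unfold_locales (rule assms(1))
  show ?thesis
    by (auto intro!: in_StabR_phiB_mat[OF assms(2)] gabidulin_vector_map_matrix
        G.basis_vector_map_mult_matrix)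
qed

lemma mdim_StabR_gabidulin_ge:
  fixes g :: "'b^'n"
  assumes "is_Fq_basis \<iota> g" "Fqm.subspace V"
  shows "CARD('m) \<le> mdim (StabR (phiB_mat \<iota> b ` restrict_V (gabidulin TYPE('a) g k) V))"
proof -
  interpret G: Fq_basis \<iota> g by unfold_locales (rule assms(1))
  interpret finite_dimensional_vector_space_pair_1 "escale \<iota>" "range (($) b)" mscale
    by unfold_locales
  have "mdim (range (mult_matrix \<iota> g)) = CARD('m)"
    using dim_image_eq[OF G.linear_mult_matrix, of UNIV] G.inj_mult_matrix
    by (simp add: mdim_def card_image[OF inj_basis] inj_on_subset)
  then show ?thesis
    using Mat.dim_subset[OF range_mult_matrix_subset_StabR[OF assms]] by (simp add: mdim_def)
qed

end

theorem mainTheorem5: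
  fixes \<iota> :: "'a::{finite,field} \<Rightarrow> 'b::{finite,field}"
    and b :: "'b^'m"
    and g :: "'b^'n"
    and k s :: nat
    and V :: "'b set"
  assumes emb: "field_emb \<iota>"
    and basis: "is_Fq_basis \<iota> b"
    and nm: "CARD('n) \<le> CARD('m)"
    and g_indep: "inj (\<lambda>j. g $ j) \<and> \<not> module.dependent (escale \<iota>) (range (\<lambda>j. g $ j))"
    and k: "1 \<le> k" "k \<le> CARD('n)"
    and V_sub: "module.subspace (escale \<iota>) V"
    and V_dim: "vector_space.dim (escale \<iota>) V = s"
    and s: "0 < s" "s < CARD('m)"
  shows
    "(CARD('m) = CARD('n) \<longrightarrow>
        (\<exists>f :: 'b \<Rightarrow> 'a^'n^'n.
            inj f \<and> f 1 = mat 1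
          \<and> (\<forall>x y. f (x + y) = f x + f y)
          \<and> (\<forall>x y. f (x * y) = f x ** f y)
          \<and> (\<forall>c x. f (\<iota> c * x) = mscale c (f x))
          \<and> range f \<subseteq> StabR (phiB_mat \<iota> b ` restrict_V (gabidulin TYPE('a) g k) V))
      \<and> mdim (StabR (phiB_mat \<iota> b ` restrict_V (gabidulin TYPE('a) g k) V)) \<ge> CARD('m))
   \<and> (\<forall>C :: ('b^'n) set. module.subspace (vscale \<iota>) C \<longrightarrow>
        mdim (AnnL (phiB_mat \<iota> b ` restrict_V C V)) \<ge> CARD('m) * (CARD('m) - s)
      \<and> mdim (StabL (phiB_mat \<iota> b ` restrict_V C V)) \<ge> CARD('m) * (CARD('m) - s) + 1)"
proof -
  interpret Fq_basis \<iota> b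
    by unfold_locales (simp_all add: emb basis)
  show ?thesis
  proof (intro conjI impI allI)
    assume "CARD('m) = CARD('n)"
    then have g: "is_Fq_basis \<iota> g"
      using g_indep by (simp add: is_Fq_basis_of_card_eq)
    interpret G: Fq_basis \<iota> g by unfold_locales (rule g)
    show "\<exists>f :: 'b \<Rightarrow> 'a^'n^'n. inj f \<and> f 1 = mat 1 \<and> (\<forall>x y. f (x + y) = f x + f y)
        \<and> (\<forall>x y. f (x * y) = f x ** f y) \<and> (\<forall>c x. f (\<iota> c * x) = mscale c (f x))
        \<and> range f \<subseteq> StabR (phiB_mat \<iota> b ` restrict_V (gabidulin TYPE('a) g k) V)"
      using G.inj_mult_matrix G.mult_matrix_1 G.mult_matrix_add G.mult_matrix_mult
        G.mult_matrix_scale range_mult_matrix_subset_StabR[OF g V_sub]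
      by (intro exI[of _ "mult_matrix \<iota> g"]) simp
    show "CARD('m) \<le> mdim (StabR (phiB_mat \<iota> b ` restrict_V (gabidulin TYPE('a) g k) V))"
      by (rule mdim_StabR_gabidulin_ge[OF g V_sub])
  next
    fix C :: "('b^'n) set"
    assume C: "module.subspace (vscale \<iota>) C"
    show "CARD('m) * (CARD('m) - s) \<le> mdim (AnnL (phiB_mat \<iota> b ` restrict_V C V))"
      using mdim_AnnL_ge[of V C] V_dim by simp
    have "V \<noteq> {0}"
      using V_dim s(1) by auto
    moreover have "0 \<in> C"
      using C by (rule zero_in_vscale_subspace)
    ultimately show "CARD('m) * (CARD('m) - s) + 1 \<le> mdim (StabL (phiB_mat \<iota> b ` restrict_V C V))"
      using mdim_StabL_ge[OF V_sub] V_dim by simp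
  qed
qed

end
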